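(* Let $n\ge 2$ and $m\ge1$ be integers, and let $t,s,r\in\mathbb{Z}_n$ with $t,r$ units of $\mathbb{Z}_n$ and $s^2=(1-tr)s$ in $\mathbb{Z}_n$. Let $X=(\mathbb{Z}_n)^m$ and $B(x,y)=(ty+sx,\,rx)$. Then the birack rank of $(X,B)$ is the smallest integer $N>0$ such that $(tr+s)^N=1$ in $\mathbb{Z}_n$.
   Context: Let $X$ be a set. A map $B:X\times X\to X\times X$, written $B=(B_1,B_2)$, is strongly invertible if: (i) $B$ is a bijection; (ii) there is a unique invertible map $S:X\times X\to X\times X$ (the sideways map) with $S(B_1(x,y),x)=(B_2(x,y),y)$ for all $x,y$; (iii) writing $S=(S_1,S_2)$, $S^{-1}=(S^{-1}_1,S^{-1}_2)$ and $\Delta(x)=(x,x)$, each of $S_1\circ\Delta$, $S_2\circ\Delta$, $S^{-1}_1\circ\Delta$, $S^{-1}_2\circ\Delta$ is a bijection $X\to X$. A birack is a pair $(X,B)$ with $B$ strongly invertible satisfying the set-theoretic Yang–Baxter equation $(B\times\mathrm{Id})(\mathrm{Id}\times B)(B\times\mathrm{Id})=(\mathrm{Id}\times B)(B\times\mathrm{Id})(\mathrm{Id}\times B)$. Its kink map is $\pi=S^{-1}_1\circ\Delta\circ(S^{-1}_2\circ\Delta)^{-1}$. The birack rank is the smallest positive integer $N$ with $\pi^N(x)=x$ for all $x\in X$. *)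

theory Defs
  imports "HOL-Number_Theory.Cong"
begin

definition is_sideways :: "'a set \<Rightarrow> ('a \<times> 'a \<Rightarrow> 'a \<times> 'a) \<Rightarrow> ('a \<times> 'a \<Rightarrow> 'a \<times> 'a) \<Rightarrow> bool" where
  "is_sideways X B S \<longleftrightarrow> bij_betw S (X \<times> X) (X \<times> X) \<and>
     (\<forall>x\<in>X. \<forall>y\<in>X. S (fst (B (x, y)), x) = (snd (B (x, y)), y))"

definition sideways_map :: "'a set \<Rightarrow> ('a \<times> 'a \<Rightarrow> 'a \<times> 'a) \<Rightarrow> ('a \<times> 'a \<Rightarrow> 'a \<times> 'a)" where
  "sideways_map X B = (SOME S. is_sideways X B S)"

definition sideways_inv :: "'a set \<Rightarrow> ('a \<times> 'a \<Rightarrow> 'a \<times> 'a) \<Rightarrow> ('a \<times> 'a \<Rightarrow> 'a \<times> 'a)" where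
  "sideways_inv X B = the_inv_into (X \<times> X) (sideways_map X B)"

definition strongly_invertible :: "'a set \<Rightarrow> ('a \<times> 'a \<Rightarrow> 'a \<times> 'a) \<Rightarrow> bool" where
  "strongly_invertible X B \<longleftrightarrow>
     bij_betw B (X \<times> X) (X \<times> X) \<and>
     (\<exists>S. is_sideways X B S \<and> (\<forall>S'. is_sideways X B S' \<longrightarrow> (\<forall>p\<in>X \<times> X. S' p = S p))) \<and>
     bij_betw (\<lambda>x. fst (sideways_map X B (x, x))) X X \<and>
     bij_betw (\<lambda>x. snd (sideways_map X B (x, x))) X X \<and>
     bij_betw (\<lambda>x. fst (sideways_inv X B (x, x))) X X \<and>
     bij_betw (\<lambda>x. snd (sideways_inv X B (x, x))) X X"

definition B_Id :: "('a \<times> 'a \<Rightarrow> 'a \<times> 'a) \<Rightarrow> 'a \<times> 'a \<times> 'a \<Rightarrow> 'a \<times> 'a \<times> 'a" where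
  "B_Id B p = (case p of (x, y, z) \<Rightarrow> (fst (B (x, y)), snd (B (x, y)), z))"

definition Id_B :: "('a \<times> 'a \<Rightarrow> 'a \<times> 'a) \<Rightarrow> 'a \<times> 'a \<times> 'a \<Rightarrow> 'a \<times> 'a \<times> 'a" where
  "Id_B B p = (case p of (x, y, z) \<Rightarrow> (x, fst (B (y, z)), snd (B (y, z))))"

definition birack :: "'a set \<Rightarrow> ('a \<times> 'a \<Rightarrow> 'a \<times> 'a) \<Rightarrow> bool" where
  "birack X B \<longleftrightarrow> strongly_invertible X B \<and>
     (\<forall>p\<in>X \<times> X \<times> X. B_Id B (Id_B B (B_Id B p)) = Id_B B (B_Id B (Id_B B p)))"

(* kink map  \<pi> = S^{-1}_1 \<circ> \<Delta> \<circ> (S^{-1}_2 \<circ> \<Delta>)^{-1}, inverse taken on X *)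
definition kink_map :: "'a set \<Rightarrow> ('a \<times> 'a \<Rightarrow> 'a \<times> 'a) \<Rightarrow> 'a \<Rightarrow> 'a" where
  "kink_map X B = (\<lambda>x. let y = the_inv_into X (\<lambda>z. snd (sideways_inv X B (z, z))) x
                        in fst (sideways_inv X B (y, y)))"

definition birack_rank :: "'a set \<Rightarrow> ('a \<times> 'a \<Rightarrow> 'a \<times> 'a) \<Rightarrow> nat" where
  "birack_rank X B = (LEAST N. 0 < N \<and> (\<forall>x\<in>X. (kink_map X B ^^ N) x = x))"

(* (Z_n)^m : vectors indexed by i < m with entries in {0..<n} (representatives), zero for i \<ge> m *)
definition zn_vecs :: "int \<Rightarrow> nat \<Rightarrow> (nat \<Rightarrow> int) set" where
  "zn_vecs n m = {v. (\<forall>i<m. v i \<in> {0..<n}) \<and> (\<forall>i\<ge>m. v i = 0)}"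

definition alex_B :: "int \<Rightarrow> int \<Rightarrow> int \<Rightarrow> int \<Rightarrow> (nat \<Rightarrow> int) \<times> (nat \<Rightarrow> int) \<Rightarrow> (nat \<Rightarrow> int) \<times> (nat \<Rightarrow> int)" where
  "alex_B n t s r p = (case p of (x, y) \<Rightarrow>
      ((\<lambda>i. (t * y i + s * x i) mod n), (\<lambda>i. (r * x i) mod n)))"

end

theory Submission
  imports Defs
begin

(* The Alexander birack B(x,y) = (t y + s x, r x) on X = (Z_n)^m is LINEAR: it acts on pairs of
   vectors through the 2x2 integer matrix [[s,t],[r,0]], reduced mod n componentwise.  In the locale  alexander_birack  (which fixes inverses
   t', r' of t, r mod n) the sideways map is the matrix map S = [[0,r],[t',-t's]] with inverse
   [[s r',t],[r',0]]; all required congruences are ideal-membership facts modulo t t' - 1, r r' - 1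
   and s^2 - (1 - t r) s, certified by Groebner-basis reasoning (the algebra method), and the
   Yang-Baxter equation is checked coordinatewise in the same way.  The diagonal maps of S and S^-1
   are scalings by units, so B is strongly invertible; the kink map is scaling by t r + s, and its
   N-th power is the identity on X exactly when (t r + s)^N = 1 mod n, which yields the rank. *)

type_synonym vec = "nat \<Rightarrow> int"

lemma zn_vecs_mod [simp]: "x \<in> zn_vecs n m \<Longrightarrow> x i mod n = x i"
  unfolding zn_vecs_def by (cases "i < m") auto

lemma zn_vecs_vanish: "x \<in> zn_vecs n m \<Longrightarrow> m \<le> i \<Longrightarrow> x i = 0"
  unfolding zn_vecs_def by auto

lemma zn_vecs_reduce:
  assumes "n > 0" and "\<And>i. m \<le> i \<Longrightarrow> f i = 0"
  shows "(\<lambda>i. f i mod n) \<in> zn_vecs n m"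
  using assms unfolding zn_vecs_def by auto

definition scale :: "int \<Rightarrow> int \<Rightarrow> vec \<Rightarrow> vec" where
  "scale n c x = (\<lambda>i. (c * x i) mod n)"

lemma scale_closed: "n > 0 \<Longrightarrow> x \<in> zn_vecs n m \<Longrightarrow> scale n c x \<in> zn_vecs n m"
  unfolding scale_def by (rule zn_vecs_reduce) (simp_all add: zn_vecs_vanish)

lemma scale_scale: "scale n c (scale n d x) = scale n (c * d) x"
  unfolding scale_def by (simp add: mod_simps mult.assoc)

lemma scale_cong: "[c = d] (mod n) \<Longrightarrow> scale n c = scale n d"
  unfolding scale_def cong_def by (metis mod_mult_left_eq)

lemma scale_one: "x \<in> zn_vecs n m \<Longrightarrow> scale n 1 x = x"
  unfolding scale_def by auto

lemma scale_unit_inverse: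
  "[c * d = 1] (mod n) \<Longrightarrow> x \<in> zn_vecs n m \<Longrightarrow> scale n c (scale n d x) = x"
  by (metis scale_cong scale_one scale_scale)

lemma scale_bij:
  assumes "n > 0" and "[c * d = 1] (mod n)"
  shows "bij_betw (scale n c) (zn_vecs n m) (zn_vecs n m)"
proof (rule bij_betw_byWitness[where f' = "scale n d"])
  have "[d * c = 1] (mod n)" using assms(2) by (simp add: mult.commute)
  then show "\<forall>x\<in>zn_vecs n m. scale n d (scale n c x) = x" using scale_unit_inverse by blast
  show "\<forall>x\<in>zn_vecs n m. scale n c (scale n d x) = x" using scale_unit_inverse assms(2) by blast
qed (use scale_closed assms(1) in blast)+

lemma scale_iterate:
  assumes "n > 0" and "\<forall>x\<in>zn_vecs n m. f x = scale n c x" and "x \<in> zn_vecs n m"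
  shows "(f ^^ N) x = scale n (c ^ N) x"
proof (induction N)
  case 0
  then show ?case using assms(3) by (simp add: scale_one)
next
  case (Suc N)
  have "(f ^^ Suc N) x = scale n c (scale n (c ^ N) x)"
    using Suc assms scale_closed by simp
  then show ?case by (simp add: scale_scale)
qed

(* Multiplication by c fixes every vector exactly when c = 1 in Z_n: test on the first unit vector. *)
lemma scale_identity_iff:
  assumes "n \<ge> 2" and "m \<ge> 1"
  shows "(\<forall>x\<in>zn_vecs n m. scale n c x = x) \<longleftrightarrow> [c = 1] (mod n)"
proof
  assume "[c = 1] (mod n)"
  then show "\<forall>x\<in>zn_vecs n m. scale n c x = x" using scale_cong scale_one by metis
next
  assume fixes_all: "\<forall>x\<in>zn_vecs n m. scale n c x = x"
  define e where "e = (\<lambda>i::nat. if i = 0 then (1::int) else 0)"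
  have "e \<in> zn_vecs n m" unfolding e_def zn_vecs_def using assms by auto
  then have "scale n c e 0 = e 0" using fixes_all by simp
  then have "c mod n = 1 mod n" using assms(1) unfolding scale_def e_def by simp
  then show "[c = 1] (mod n)" unfolding cong_def .
qed

(* 2x2 integer matrices (a,b,c,d) = [[a,b],[c,d]] acting on pairs of vectors, reduced mod n. *)
type_synonym mat2 = "int \<times> int \<times> int \<times> int"

fun lin_map :: "int \<Rightarrow> mat2 \<Rightarrow> vec \<times> vec \<Rightarrow> vec \<times> vec" where
  "lin_map n (a, b, c, d) (x, y) =
     ((\<lambda>i. (a * x i + b * y i) mod n), (\<lambda>i. (c * x i + d * y i) mod n))"

fun mat_mult :: "mat2 \<Rightarrow> mat2 \<Rightarrow> mat2" where
  "mat_mult (a, b, c, d) (e, f, g, h) = (a * e + b * g, a * f + b * h, c * e + d * g, c * f + d * h)"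

fun mat_cong :: "int \<Rightarrow> mat2 \<Rightarrow> mat2 \<Rightarrow> bool" where
  "mat_cong n (a, b, c, d) (a', b', c', d') \<longleftrightarrow>
     [a = a'] (mod n) \<and> [b = b'] (mod n) \<and> [c = c'] (mod n) \<and> [d = d'] (mod n)"

abbreviation mat_id :: mat2 where "mat_id \<equiv> (1, 0, 0, 1)"

definition mat_inverse :: "int \<Rightarrow> mat2 \<Rightarrow> mat2 \<Rightarrow> bool" where
  "mat_inverse n M N \<longleftrightarrow> mat_cong n (mat_mult M N) mat_id \<and> mat_cong n (mat_mult N M) mat_id"

lemma mod_lin_comb_right: "(a * (u mod n) + b * (v mod n)) mod n = (a * u + b * v) mod (n::int)"
  by (metis mod_add_eq mod_mult_right_eq)

lemma mod_lin_comb_left: "((a mod n) * u + (b mod n) * v) mod n = (a * u + b * v) mod (n::int)"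
  by (metis mod_add_eq mod_mult_left_eq)

lemma lin_comb_compose:
  "(a * ((e * x + f * y) mod n) + b * ((g * x + h * y) mod n)) mod n =
     ((a * e + b * g) * x + (a * f + b * h) * y) mod (n::int)"
  unfolding mod_lin_comb_right by (simp add: algebra_simps)

lemma lin_map_mult: "lin_map n M (lin_map n N p) = lin_map n (mat_mult M N) p"
  by (cases M; cases N; cases p) (simp add: lin_comb_compose)

lemma lin_comb_cong:
  assumes "[a = a'] (mod n)" and "[b = b'] (mod n)"
  shows "(a * u + b * v) mod n = (a' * u + b' * v) mod (n::int)"
proof -
  have "(a * u + b * v) mod n = ((a mod n) * u + (b mod n) * v) mod n"
    by (rule mod_lin_comb_left[symmetric])
  also have "\<dots> = ((a' mod n) * u + (b' mod n) * v) mod n"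
    using assms unfolding cong_def by simp
  also have "\<dots> = (a' * u + b' * v) mod n"
    by (rule mod_lin_comb_left)
  finally show ?thesis .
qed

lemma lin_map_cong: "mat_cong n M N \<Longrightarrow> lin_map n M p = lin_map n N p"
  by (cases M; cases N; cases p) (auto intro!: ext lin_comb_cong)

(* The identity matrix acts as the identity on X \<times> X (coordinates are already reduced). *)
lemma lin_map_id: "p \<in> zn_vecs n m \<times> zn_vecs n m \<Longrightarrow> lin_map n mat_id p = p"
  by (cases p) auto

lemma lin_map_closed:
  "n > 0 \<Longrightarrow> p \<in> zn_vecs n m \<times> zn_vecs n m \<Longrightarrow> lin_map n M p \<in> zn_vecs n m \<times> zn_vecs n m"
  by (cases M; cases p) (auto intro!: zn_vecs_reduce simp: zn_vecs_vanish)

lemma lin_map_inverse: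
  "mat_cong n (mat_mult M N) mat_id \<Longrightarrow> p \<in> zn_vecs n m \<times> zn_vecs n m \<Longrightarrow>
     lin_map n M (lin_map n N p) = p"
  by (simp add: lin_map_mult lin_map_cong[of n _ mat_id] lin_map_id)

lemma lin_map_bij:
  assumes "n > 0" and "mat_inverse n M N"
  shows "bij_betw (lin_map n M) (zn_vecs n m \<times> zn_vecs n m) (zn_vecs n m \<times> zn_vecs n m)"
  by (rule bij_betw_byWitness[where f' = "lin_map n N"])
    (use assms lin_map_inverse lin_map_closed in \<open>unfold mat_inverse_def, blast\<close>)+

lemma lin_map_diag: "lin_map n (a, b, c, d) (x, x) = (scale n (a + b) x, scale n (c + d) x)"
  by (simp add: scale_def algebra_simps)

lemma sideways_determined:
  assumes "is_sideways X B S" and "is_sideways X B S'"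
    and onto: "\<And>a x. a \<in> X \<Longrightarrow> x \<in> X \<Longrightarrow> \<exists>y\<in>X. fst (B (x, y)) = a"
    and "p \<in> X \<times> X"
  shows "S' p = S p"
proof -
  obtain a x where p: "p = (a, x)" and "a \<in> X" "x \<in> X" using assms(4) by auto
  then obtain y where "y \<in> X" and a: "fst (B (x, y)) = a" using onto by blast
  then have "S' (a, x) = (snd (B (x, y)), y)" and "S (a, x) = (snd (B (x, y)), y)"
    using assms(1,2) \<open>x \<in> X\<close> unfolding is_sideways_def by (metis a)+
  then show ?thesis unfolding p by simp
qed

lemma sideways_map_eqI:
  assumes "is_sideways X B S"
    and "\<And>a x. a \<in> X \<Longrightarrow> x \<in> X \<Longrightarrow> \<exists>y\<in>X. fst (B (x, y)) = a"
    and "p \<in> X \<times> X"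
  shows "sideways_map X B p = S p"
proof -
  have "is_sideways X B (sideways_map X B)"
    unfolding sideways_map_def using assms(1) by (rule someI[of "is_sideways X B"])
  then show ?thesis using sideways_determined assms by blast
qed

lemma sideways_inv_eqI:
  assumes "\<forall>p\<in>X \<times> X. sideways_map X B p = S p" and "inj_on S (X \<times> X)"
    and "q \<in> X \<times> X" and "T q \<in> X \<times> X" and "S (T q) = q"
  shows "sideways_inv X B q = T q"
proof -
  have "inj_on (sideways_map X B) (X \<times> X)"
    using inj_on_cong[of "X \<times> X" "sideways_map X B" S] assms(1,2) by simp
  moreover have "sideways_map X B (T q) = q"
    using assms(1,4,5) by metis
  ultimately show ?thesis unfolding sideways_inv_def
    using assms(4) by (rule the_inv_into_f_eq)
qed

lemma kink_map_eqI:
  assumes "inj_on (\<lambda>z. snd (sideways_inv X B (z, z))) X"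
    and "y \<in> X" and "snd (sideways_inv X B (y, y)) = x"
  shows "kink_map X B x = fst (sideways_inv X B (y, y))"
proof -
  have "the_inv_into X (\<lambda>z. snd (sideways_inv X B (z, z))) x = y"
    using assms by (intro the_inv_into_f_eq) auto
  then show ?thesis unfolding kink_map_def by simp
qed

locale alexander_birack =
  fixes n t s r t' r' :: int and m :: nat
  assumes n_ge_2: "n \<ge> 2" and m_ge_1: "m \<ge> 1"
    and t_inverse: "[t * t' = 1] (mod n)" and r_inverse: "[r * r' = 1] (mod n)"
    and s_relation: "[s ^ 2 = (1 - t * r) * s] (mod n)"
begin

abbreviation X :: "vec set" where "X \<equiv> zn_vecs n m"
abbreviation B :: "vec \<times> vec \<Rightarrow> vec \<times> vec" where "B \<equiv> alex_B n t s r"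

lemma n_pos: "n > 0"
  using n_ge_2 by simp

lemmas relations = t_inverse r_inverse s_relation

(* B = [[s,t],[r,0]];  P = [[s,t],[1,0]] describes (x,y) \<mapsto> (B\<^sub>1(x,y), x) and
   Q = [[r,0],[0,1]] describes (x,y) \<mapsto> (B\<^sub>2(x,y), y).  The sideways map is S = Q P\<^sup>-\<^sup>1. *)
definition B_mat :: mat2 where "B_mat = (s, t, r, 0)"
definition B_inv_mat :: mat2 where "B_inv_mat = (0, r', t', - (t' * s * r'))"
definition P_mat :: mat2 where "P_mat = (s, t, 1, 0)"
definition P_inv_mat :: mat2 where "P_inv_mat = (0, 1, t', - (t' * s))"
definition Q_mat :: mat2 where "Q_mat = (r, 0, 0, 1)"
definition S_mat :: mat2 where "S_mat = (0, r, t', - (t' * s))"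
definition S_inv_mat :: mat2 where "S_inv_mat = (s * r', t, r', 0)"

lemmas matrices = B_mat_def B_inv_mat_def P_mat_def P_inv_mat_def Q_mat_def S_mat_def S_inv_mat_def

(* Each matrix identity below holds because the differences of corresponding entries lie in the
   ideal generated by t t' - 1, r r' - 1 and s^2 - (1 - t r) s together with n; the algebra
   method finds the cofactors. *)
lemma B_mat_invertible: "mat_inverse n B_mat B_inv_mat"
  unfolding mat_inverse_def matrices
  by (simp; (intro conjI)?; insert relations; unfold cong_iff_dvd_diff dvd_def) algebra+

lemma P_mat_invertible: "mat_inverse n P_mat P_inv_mat"
  unfolding mat_inverse_def matrices
  by (simp; (intro conjI)?; insert relations; unfold cong_iff_dvd_diff dvd_def) algebra+

lemma S_mat_invertible: "mat_inverse n S_mat S_inv_mat"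
  unfolding mat_inverse_def matrices
  by (simp; (intro conjI)?; insert relations; unfold cong_iff_dvd_diff dvd_def) algebra+

(* S P = Q mod n: this is the defining property of the sideways map in matrix form. *)
lemma S_mat_P_mat: "mat_cong n (mat_mult S_mat P_mat) Q_mat"
  unfolding matrices
  by (simp; (intro conjI)?; insert relations; unfold cong_iff_dvd_diff dvd_def) algebra+

lemma B_lin_map: "B = lin_map n B_mat"
proof
  fix p :: "vec \<times> vec"
  show "B p = lin_map n B_mat p"
    by (cases p) (simp add: alex_B_def B_mat_def add.commute)
qed

lemma B_bij: "bij_betw B (X \<times> X) (X \<times> X)"
  unfolding B_lin_map using n_pos B_mat_invertible by (rule lin_map_bij)

lemma B_pairs:
  assumes "x \<in> X" and "y \<in> X"
  shows "(fst (B (x, y)), x) = lin_map n P_mat (x, y)"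
    and "(snd (B (x, y)), y) = lin_map n Q_mat (x, y)"
  using assms by (simp_all add: alex_B_def P_mat_def Q_mat_def add.commute)

lemma S_is_sideways: "is_sideways X B (lin_map n S_mat)"
  unfolding is_sideways_def
proof (intro conjI ballI)
  show "bij_betw (lin_map n S_mat) (X \<times> X) (X \<times> X)"
    using n_pos S_mat_invertible by (rule lin_map_bij)
  fix x y assume "x \<in> X" and "y \<in> X"
  then show "lin_map n S_mat (fst (B (x, y)), x) = (snd (B (x, y)), y)"
    by (simp only: B_pairs lin_map_mult lin_map_cong[OF S_mat_P_mat])
qed

(* y \<mapsto> B\<^sub>1(x,y) is onto X, so the sideways map is unique. *)
lemma B_first_onto:
  assumes "a \<in> X" and "x \<in> X"
  shows "\<exists>y\<in>X. fst (B (x, y)) = a"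
proof -
  define y where "y = snd (lin_map n P_inv_mat (a, x))"
  have preimage: "lin_map n P_inv_mat (a, x) = (x, y)"
    using assms(2) unfolding y_def P_inv_mat_def by simp
  have "lin_map n P_inv_mat (a, x) \<in> X \<times> X"
    using lin_map_closed[OF n_pos] assms by blast
  then have "y \<in> X" unfolding preimage by simp
  moreover have "lin_map n P_mat (x, y) = (a, x)"
    using lin_map_inverse[of n P_mat P_inv_mat "(a, x)"] P_mat_invertible assms
    unfolding preimage mat_inverse_def by blast
  ultimately show ?thesis
    using B_pairs(1)[OF assms(2)] by (metis fst_conv)
qed

lemma sideways_map_lin: "p \<in> X \<times> X \<Longrightarrow> sideways_map X B p = lin_map n S_mat p"
  using S_is_sideways B_first_onto by (rule sideways_map_eqI)

lemma sideways_inv_lin: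
  assumes "q \<in> X \<times> X"
  shows "sideways_inv X B q = lin_map n S_inv_mat q"
proof (rule sideways_inv_eqI)
  show "\<forall>p\<in>X \<times> X. sideways_map X B p = lin_map n S_mat p"
    using sideways_map_lin by blast
  show "inj_on (lin_map n S_mat) (X \<times> X)"
    using lin_map_bij[OF n_pos S_mat_invertible] by (rule bij_betw_imp_inj_on)
  show "lin_map n S_inv_mat q \<in> X \<times> X"
    using lin_map_closed[OF n_pos] assms by blast
  show "lin_map n S_mat (lin_map n S_inv_mat q) = q"
    using lin_map_inverse S_mat_invertible assms unfolding mat_inverse_def by blast
qed (rule assms)

lemma sideways_map_diag:
  "x \<in> X \<Longrightarrow> sideways_map X B (x, x) = (scale n r x, scale n (t' - t' * s) x)"
  by (simp add: sideways_map_lin S_mat_def lin_map_diag del: lin_map.simps)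

lemma sideways_inv_diag:
  "x \<in> X \<Longrightarrow> sideways_inv X B (x, x) = (scale n (s * r' + t) x, scale n r' x)"
  by (simp add: sideways_inv_lin S_inv_mat_def lin_map_diag del: lin_map.simps)

lemma diagonal_units:
  "[r' * r = 1] (mod n)" "[(t' - t' * s) * (s * r' + t) = 1] (mod n)"
  "[(s * r' + t) * (t' - t' * s) = 1] (mod n)" "[(s * r' + t) * r = t * r + s] (mod n)"
  using relations unfolding cong_iff_dvd_diff dvd_def by algebra+

lemma strongly_invertible: "strongly_invertible X B"
  unfolding strongly_invertible_def
proof (intro conjI)
  show "bij_betw B (X \<times> X) (X \<times> X)" by (rule B_bij)
  show "\<exists>S. is_sideways X B S \<and> (\<forall>S'. is_sideways X B S' \<longrightarrow> (\<forall>p\<in>X \<times> X. S' p = S p))"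
    using S_is_sideways sideways_determined B_first_onto by blast
  show "bij_betw (\<lambda>x. fst (sideways_map X B (x, x))) X X"
    using scale_bij[OF n_pos r_inverse]
    by (rule bij_betw_cong[THEN iffD1, rotated]) (simp add: sideways_map_diag)
  show "bij_betw (\<lambda>x. snd (sideways_map X B (x, x))) X X"
    using scale_bij[OF n_pos diagonal_units(2)]
    by (rule bij_betw_cong[THEN iffD1, rotated]) (simp add: sideways_map_diag)
  show "bij_betw (\<lambda>x. fst (sideways_inv X B (x, x))) X X"
    using scale_bij[OF n_pos diagonal_units(3)]
    by (rule bij_betw_cong[THEN iffD1, rotated]) (simp add: sideways_inv_diag)
  show "bij_betw (\<lambda>x. snd (sideways_inv X B (x, x))) X X"
    using scale_bij[OF n_pos diagonal_units(1)]
    by (rule bij_betw_cong[THEN iffD1, rotated]) (simp add: sideways_inv_diag)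
qed

(* Yang-Baxter: the two sides agree except in the first coordinate, where they differ by
   (s^2 - (1 - t r) s) x. *)
lemma yang_baxter: "B_Id B (Id_B B (B_Id B p)) = Id_B B (B_Id B (Id_B B p))"
proof -
  obtain x y z where p: "p = (x, y, z)" by (cases p)
  have first_coordinate:
    "[t * ((t * z i + s * (r * x i mod n)) mod n) + s * ((t * y i + s * x i) mod n) =
      t * ((t * z i + s * y i) mod n) + s * x i] (mod n)" for i
    using s_relation unfolding cong_iff_dvd_diff dvd_def minus_div_mult_eq_mod[symmetric]
    by algebra
  have second_coordinate:
    "[r * ((t * y i + s * x i) mod n) = t * (r * y i mod n) + s * (r * x i mod n)] (mod n)" for i
    unfolding cong_iff_dvd_diff dvd_def minus_div_mult_eq_mod[symmetric] by algebra
  show ?thesis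
    unfolding p B_Id_def Id_B_def alex_B_def
    using first_coordinate second_coordinate by (simp add: fun_eq_iff flip: cong_def)
qed

lemma is_birack: "birack X B"
  unfolding birack_def using strongly_invertible yang_baxter by simp

(* The kink map is multiplication by t r + s: the preimage of x under S\<^sup>-\<^sup>1\<^sub>2 \<circ> \<Delta> = r' \<cdot> is r x. *)
lemma kink_map_scale:
  assumes "x \<in> X"
  shows "kink_map X B x = scale n (t * r + s) x"
proof -
  have rx: "scale n r x \<in> X" using scale_closed[OF n_pos assms] .
  have "inj_on (scale n r') X"
    using scale_bij[OF n_pos diagonal_units(1)] by (rule bij_betw_imp_inj_on)
  then have "inj_on (\<lambda>z. snd (sideways_inv X B (z, z))) X"
    using inj_on_cong[of X "\<lambda>z. snd (sideways_inv X B (z, z))" "scale n r'"]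
    by (simp add: sideways_inv_diag)
  moreover have "snd (sideways_inv X B (scale n r x, scale n r x)) = x"
    using sideways_inv_diag[OF rx] scale_unit_inverse[OF diagonal_units(1) assms] by simp
  ultimately have "kink_map X B x = fst (sideways_inv X B (scale n r x, scale n r x))"
    by (rule kink_map_eqI[OF _ rx])
  also have "\<dots> = scale n (s * r' + t) (scale n r x)"
    using sideways_inv_diag[OF rx] by simp
  also have "\<dots> = scale n (t * r + s) x"
    using diagonal_units(4) by (simp add: scale_scale scale_cong)
  finally show ?thesis .
qed

lemma birack_rank_eq: "birack_rank X B = (LEAST N::nat. 0 < N \<and> [(t * r + s) ^ N = 1] (mod n))"
proof -
  have "\<forall>x\<in>X. kink_map X B x = scale n (t * r + s) x"
    using kink_map_scale by blast
  then have "(kink_map X B ^^ N) x = scale n ((t * r + s) ^ N) x" if "x \<in> X" for N x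
    using scale_iterate[OF n_pos _ that] by blast
  then have fixes_all:
    "(\<forall>x\<in>X. (kink_map X B ^^ N) x = x) \<longleftrightarrow> [(t * r + s) ^ N = 1] (mod n)" for N
    using scale_identity_iff[OF n_ge_2 m_ge_1, of "(t * r + s) ^ N"] by simp
  show ?thesis unfolding birack_rank_def fixes_all ..
qed

end

theorem mainTheorem5:
  fixes n t s r :: int and m :: nat
  assumes "n \<ge> 2" and "m \<ge> 1"
    and "t \<in> {0..<n}" and "s \<in> {0..<n}" and "r \<in> {0..<n}"
    and "coprime t n" and "coprime r n"
    and "[s ^ 2 = (1 - t * r) * s] (mod n)"
  shows "birack (zn_vecs n m) (alex_B n t s r) \<and>
         birack_rank (zn_vecs n m) (alex_B n t s r) =
           (LEAST N::nat. 0 < N \<and> [(t * r + s) ^ N = 1] (mod n))"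
proof -
  obtain t' where "[t * t' = 1] (mod n)" using cong_solve_coprime_int assms(6) by blast
  moreover obtain r' where "[r * r' = 1] (mod n)" using cong_solve_coprime_int assms(7) by blast
  ultimately interpret alexander_birack n t s r t' r' m
    using assms by unfold_locales
  show ?thesis using is_birack birack_rank_eq by blast
qed

end
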